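(* Let $\mathbb{F}$ be a field, $\prec$ a term order on the monomials of $\mathbb{F}[x_1,\ldots,x_n]$, $\mathcal{F}\subseteq\mathbb{F}^n$ a finite set, $h\in\mathbb{F}^n\setminus\mathcal{F}$, and $\mathcal{T}:=\mathcal{F}\cup\{h\}$. Let $\{g_1,\ldots,g_s\}$ be the reduced Gröbner basis of $I(\mathcal{F})$ with respect to $\prec$, indexed so that $\mathrm{lm}_\prec(g_1)\prec\cdots\prec\mathrm{lm}_\prec(g_s)$, and let $i:=\min\{j:g_j(h)\ne0\}$. Let $\chi_h:\mathcal{T}\to\mathbb{F}$ be given by $\chi_h(h)=1$ and $\chi_h(f)=0$ for $f\in\mathcal{F}$. Then $\chi_h(t)=\frac{1}{g_i(h)}g_i(t)$ for all $t\in\mathcal{T}$, and $\frac{1}{g_i(h)}g_i$ is a linear combination of monomials in $\mathrm{Sm}(\prec,\mathcal{T})$; i.e. it is the unique expansion of $\chi_h$ as a linear combination of standard monomials of $I(\mathcal{T})$.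
   Context: $I(\mathcal{F})$ is the ideal of polynomials vanishing on $\mathcal{F}$; $\mathrm{Sm}(\prec,\mathcal{T})$ is the set of monomials that are not leading monomials of nonzero elements of $I(\mathcal{T})$. A reduced Gröbner basis is a Gröbner basis whose elements have leading coefficient 1 and none of whose monomials is divisible by the leading monomial of another element. *)

theory Defs
  imports Main "HOL-Library.Poly_Mapping"
begin

text \<open>Multivariate polynomials over a field in the variables indexed by a finite type 'v
  (so n = CARD of that type).\<close>

type_synonym 'v monomial = "'v \<Rightarrow>\<^sub>0 nat"
type_synonym ('v, 'a) mpoly = "'v monomial \<Rightarrow>\<^sub>0 'a"

definition eval_mono :: "'v::finite monomial \<Rightarrow> ('v \<Rightarrow> 'a::comm_semiring_1) \<Rightarrow> 'a" where
  "eval_mono m x = (\<Prod>v\<in>UNIV. x v ^ Poly_Mapping.lookup m v)"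

definition eval_poly :: "('v::finite, 'a::comm_semiring_1) mpoly \<Rightarrow> ('v \<Rightarrow> 'a) \<Rightarrow> 'a" where
  "eval_poly p x = (\<Sum>m\<in>Poly_Mapping.keys p. Poly_Mapping.lookup p m * eval_mono m x)"

definition smult_poly :: "'a::comm_semiring_1 \<Rightarrow> ('v, 'a) mpoly \<Rightarrow> ('v, 'a) mpoly" where
  "smult_poly c p = Poly_Mapping.map (\<lambda>a. c * a) p"

definition mono_dvd :: "'v monomial \<Rightarrow> 'v monomial \<Rightarrow> bool" where
  "mono_dvd m1 m2 \<longleftrightarrow> (\<forall>v. Poly_Mapping.lookup m1 v \<le> Poly_Mapping.lookup m2 v)"

definition term_order :: "('v monomial \<Rightarrow> 'v monomial \<Rightarrow> bool) \<Rightarrow> bool" where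
  "term_order le \<longleftrightarrow>
     (\<forall>a. le a a) \<and>
     (\<forall>a b. le a b \<and> le b a \<longrightarrow> a = b) \<and>
     (\<forall>a b c. le a b \<and> le b c \<longrightarrow> le a c) \<and>
     (\<forall>a b. le a b \<or> le b a) \<and>
     (\<forall>a. le 0 a) \<and>
     (\<forall>a b c. le a b \<longrightarrow> le (a + c) (b + c))"

definition lm :: "('v monomial \<Rightarrow> 'v monomial \<Rightarrow> bool) \<Rightarrow> ('v, 'a::zero) mpoly \<Rightarrow> 'v monomial" where
  "lm le p = (THE m. m \<in> Poly_Mapping.keys p \<and> (\<forall>m'\<in>Poly_Mapping.keys p. le m' m))"

definition lc :: "('v monomial \<Rightarrow> 'v monomial \<Rightarrow> bool) \<Rightarrow> ('v, 'a::zero) mpoly \<Rightarrow> 'a" where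
  "lc le p = Poly_Mapping.lookup p (lm le p)"

definition vanishing_ideal :: "('v::finite \<Rightarrow> 'a::comm_semiring_1) set \<Rightarrow> ('v, 'a) mpoly set" where
  "vanishing_ideal S = {p. \<forall>x\<in>S. eval_poly p x = 0}"

definition is_groebner_basis ::
  "('v monomial \<Rightarrow> 'v monomial \<Rightarrow> bool) \<Rightarrow> ('v, 'a::zero) mpoly set \<Rightarrow> ('v, 'a) mpoly set \<Rightarrow> bool" where
  "is_groebner_basis le G I \<longleftrightarrow>
     finite G \<and> G \<subseteq> I \<and> 0 \<notin> G \<and>
     (\<forall>p\<in>I. p \<noteq> 0 \<longrightarrow> (\<exists>g\<in>G. mono_dvd (lm le g) (lm le p)))"

definition is_reduced_groebner_basis ::
  "('v monomial \<Rightarrow> 'v monomial \<Rightarrow> bool) \<Rightarrow> ('v, 'a::{zero,one}) mpoly set \<Rightarrow> ('v, 'a) mpoly set \<Rightarrow> bool" where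
  "is_reduced_groebner_basis le G I \<longleftrightarrow>
     is_groebner_basis le G I \<and>
     (\<forall>g\<in>G. lc le g = 1) \<and>
     (\<forall>g\<in>G. \<forall>g'\<in>G. g \<noteq> g' \<longrightarrow> (\<forall>m\<in>Poly_Mapping.keys g. \<not> mono_dvd (lm le g') m))"

definition standard_monomials ::
  "('v monomial \<Rightarrow> 'v monomial \<Rightarrow> bool) \<Rightarrow> ('v::finite \<Rightarrow> 'a::comm_semiring_1) set \<Rightarrow> 'v monomial set" where
  "standard_monomials le T =
     {m. \<not> (\<exists>p\<in>vanishing_ideal T. p \<noteq> 0 \<and> lm le p = m)}"

end

theory Submission
  imports Defs "HOL-Library.Ramsey"
begin

text \<open>The polynomial g_i vanishes on F but not at h, so its normalisation interpolates the
  indicator of h on T. A polynomial in I(F) not vanishing at h can be reduced by Groebner basis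
  elements that vanish at h without changing its value at h; hence lm g_i is the least leading
  monomial of all such polynomials. If a monomial of g_i were the leading monomial of some p in
  I(T), reducedness would force it to be lm g_i, and reducing g_i by p would give an element of
  I(F) not vanishing at h with a smaller leading monomial. Uniqueness holds because a nonzero
  polynomial supported on standard monomials of I(T) cannot vanish on T.\<close>

lemma mono_dvd_eq_add_diff: "mono_dvd a b \<Longrightarrow> b = a + (b - a)"
  unfolding mono_dvd_def poly_mapping_eq_iff by (auto simp: lookup_add lookup_minus fun_eq_iff)

context
  fixes le :: "'v monomial \<Rightarrow> 'v monomial \<Rightarrow> bool"
  assumes term_order: "term_order le"
begin

lemma term_order_refl: "le a a"
  using term_order unfolding term_order_def by blast

lemma term_order_antisym: "le a b \<Longrightarrow> le b a \<Longrightarrow> a = b"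
  using term_order unfolding term_order_def by blast

lemma term_order_trans: "le a b \<Longrightarrow> le b c \<Longrightarrow> le a c"
  using term_order unfolding term_order_def by blast

lemma term_order_total: "le a b \<or> le b a"
  using term_order unfolding term_order_def by blast

lemma term_order_zero_le: "le 0 a"
  using term_order unfolding term_order_def by blast

lemma term_order_add_left: "le a b \<Longrightarrow> le (c + a) (c + b)"
  using term_order unfolding term_order_def by (metis add.commute)

lemma mono_dvd_imp_term_order_le:
  assumes "mono_dvd a b"
  shows "le a b"
proof -
  have "b = a + (b - a)" using assms by (rule mono_dvd_eq_add_diff)
  moreover have "le (a + 0) (a + (b - a))"
    by (rule term_order_add_left[OF term_order_zero_le])
  ultimately show ?thesis by simp
qed

lemma finite_has_term_order_greatest:
  assumes "finite A" "A \<noteq> {}"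
  shows "\<exists>m\<in>A. \<forall>a\<in>A. le a m"
  using assms
proof (induction A rule: finite_ne_induct)
  case (singleton x)
  then show ?case using term_order_refl by blast
next
  case (insert x A)
  then obtain m where "m \<in> A" "\<forall>a\<in>A. le a m" by blast
  then show ?case using term_order_total term_order_trans by (metis insert_iff)
qed

lemma lm_greatest:
  assumes "p \<noteq> 0"
  shows "lm le p \<in> Poly_Mapping.keys p" "\<forall>m\<in>Poly_Mapping.keys p. le m (lm le p)"
proof -
  obtain m where m: "m \<in> Poly_Mapping.keys p" "\<forall>m'\<in>Poly_Mapping.keys p. le m' m"
    using finite_has_term_order_greatest[of "Poly_Mapping.keys p"] assms by auto
  have "lm le p = m"
    unfolding lm_def using m term_order_antisym by (intro the_equality) auto
  then show "lm le p \<in> Poly_Mapping.keys p" "\<forall>m\<in>Poly_Mapping.keys p. le m (lm le p)"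
    using m by simp_all
qed

lemma le_lm: "m \<in> Poly_Mapping.keys p \<Longrightarrow> le m (lm le p)"
  by (cases "p = 0") (simp_all add: lm_greatest(2))

lemma lm_less_if_lookup_eq_0:
  assumes "q \<noteq> 0" "\<forall>m\<in>Poly_Mapping.keys q. le m M" "Poly_Mapping.lookup q M = 0"
  shows "le (lm le q) M" "lm le q \<noteq> M"
  using lm_greatest(1)[OF assms(1)] assms(2,3) by (auto simp: in_keys_iff)

end

subsection \<open>Well-foundedness of term orders\<close>

text \<open>Dickson's lemma, via Ramsey's theorem for the pairs i < j coloured by the set of variables
  whose exponent does not decrease from f i to f j.\<close>

lemma mono_dvd_good_pair:
  fixes f :: "nat \<Rightarrow> 'v::finite monomial"
  shows "\<exists>i j. i < j \<and> mono_dvd (f i) (f j)"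
proof -
  obtain enc :: "'v set \<Rightarrow> nat" and n where enc: "enc ` UNIV = {i. i < n}" "inj enc"
    using finite_imp_inj_to_nat_seg[of "UNIV :: 'v set set"] by auto
  define below where "below i j = {v. Poly_Mapping.lookup (f i) v \<le> Poly_Mapping.lookup (f j) v}"
    for i j
  define colour where "colour X = enc (below (Min X) (Max X))" for X :: "nat set"
  have "\<forall>x\<in>UNIV. \<forall>y\<in>UNIV. x \<noteq> y \<longrightarrow> colour {x, y} < n"
    using enc(1) unfolding colour_def by auto
  from Ramsey2[OF infinite_UNIV_nat this] obtain Y t where Y: "infinite Y"
    "\<forall>x\<in>Y. \<forall>y\<in>Y. x \<noteq> y \<longrightarrow> colour {x, y} = t" by blast
  have below_eq: "below a b = below x y" if "a \<in> Y" "b \<in> Y" "a < b" "x \<in> Y" "y \<in> Y" "x < y"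
    for a b x y
  proof -
    have "colour {a, b} = colour {x, y}" using Y(2) that by auto
    moreover have "Min {a, b} = a" "Max {a, b} = b" "Min {x, y} = x" "Max {x, y} = y"
      using that by auto
    ultimately have "enc (below a b) = enc (below x y)" by (simp add: colour_def)
    then show ?thesis using enc(2) by (simp add: inj_eq)
  qed
  have unbounded: "\<exists>k>m. k \<in> Y" for m using Y(1) by (simp add: infinite_nat_iff_unbounded)
  obtain x where "x \<in> Y" using unbounded by blast
  moreover obtain y where "x < y" "y \<in> Y" using unbounded by blast
  ultimately have xy: "x \<in> Y" "y \<in> Y" "x < y" by simp_all
  show ?thesis
  proof (cases "below x y = UNIV")
    case True
    then have "mono_dvd (f x) (f y)" unfolding below_def mono_dvd_def by (simp add: set_eq_iff)
    then show ?thesis using xy(3) by blast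
  next
    case False
    then obtain v where v: "v \<notin> below x y" by blast
    \<comment> \<open>along Y the v-exponent strictly decreases, which is impossible in nat\<close>
    obtain a where a: "a \<in> Y" "\<forall>b\<in>Y. Poly_Mapping.lookup (f a) v \<le> Poly_Mapping.lookup (f b) v"
      using ex_has_least_nat[of "\<lambda>a. a \<in> Y" x "\<lambda>a. Poly_Mapping.lookup (f a) v"] xy(1) by blast
    obtain b where b: "b > a" "b \<in> Y" using unbounded by blast
    have "v \<notin> below a b" using below_eq[OF a(1) b(2,1) xy] v by simp
    moreover have "Poly_Mapping.lookup (f a) v \<le> Poly_Mapping.lookup (f b) v" using a(2) b(2) by blast
    ultimately show ?thesis unfolding below_def by simp
  qed
qed

lemma term_order_wf:
  fixes le :: "'v::finite monomial \<Rightarrow> 'v monomial \<Rightarrow> bool"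
  assumes "term_order le"
  shows "wf {(a, b). le a b \<and> a \<noteq> b}"
proof (rule ccontr)
  assume "\<not> wf {(a, b). le a b \<and> a \<noteq> b}"
  then obtain f where "\<forall>i. (f (Suc i), f i) \<in> {(a, b). le a b \<and> a \<noteq> b}"
    using wf_iff_no_infinite_down_chain by blast
  then have f: "le (f (Suc i)) (f i)" "f (Suc i) \<noteq> f i" for i by auto
  have descending: "le (f j) (f i)" if "i \<le> j" for i j
    using that
  proof (induction rule: dec_induct)
    case base
    show ?case by (rule term_order_refl[OF assms])
  next
    case (step k)
    then show ?case using f(1) term_order_trans[OF assms] by blast
  qed
  obtain i j where "i < j" "mono_dvd (f i) (f j)" using mono_dvd_good_pair by blast
  have "le (f i) (f j)" by (rule mono_dvd_imp_term_order_le[OF assms \<open>mono_dvd (f i) (f j)\<close>])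
  moreover have "le (f j) (f (Suc i))" by (rule descending) (use \<open>i < j\<close> in simp)
  ultimately have "le (f i) (f (Suc i))" by (rule term_order_trans[OF assms])
  then show False using f term_order_antisym[OF assms] by blast
qed

lemma term_order_has_least:
  fixes le :: "'v::finite monomial \<Rightarrow> 'v monomial \<Rightarrow> bool"
  assumes "term_order le" "x \<in> A"
  shows "\<exists>m\<in>A. \<forall>a\<in>A. le m a"
proof -
  obtain m where "m \<in> A" and minimal: "\<And>a. (a, m) \<in> {(a, b). le a b \<and> a \<noteq> b} \<Longrightarrow> a \<notin> A"
    by (rule wfE_min[OF term_order_wf[OF assms(1)] assms(2)]) blast
  have "le m a" if "a \<in> A" for a
  proof (rule ccontr)
    assume "\<not> le m a"
    then have "(a, m) \<in> {(a, b). le a b \<and> a \<noteq> b}"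
      using term_order_total[OF assms(1)] term_order_refl[OF assms(1)] by auto
    then show False using minimal that by blast
  qed
  then show ?thesis using \<open>m \<in> A\<close> by blast
qed

lemma eval_poly_superset:
  assumes "finite S" "Poly_Mapping.keys p \<subseteq> S"
  shows "eval_poly p x = (\<Sum>m\<in>S. Poly_Mapping.lookup p m * eval_mono m x)"
  unfolding eval_poly_def
  by (rule sum.mono_neutral_left) (use assms in \<open>auto simp: in_keys_iff\<close>)

lemma eval_poly_zero [simp]: "eval_poly 0 x = 0"
  by (simp add: eval_poly_def)

lemma eval_poly_single: "eval_poly (Poly_Mapping.single m c) x = c * eval_mono m x"
  by (simp add: eval_poly_def)

lemma eval_poly_add: "eval_poly (p + q) x = eval_poly p x + eval_poly q x"
proof -
  let ?S = "Poly_Mapping.keys p \<union> Poly_Mapping.keys q"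
  have "eval_poly (p + q) x = (\<Sum>m\<in>?S. Poly_Mapping.lookup (p + q) m * eval_mono m x)"
    by (rule eval_poly_superset) (auto simp: keys_add)
  also have "\<dots> = (\<Sum>m\<in>?S. Poly_Mapping.lookup p m * eval_mono m x)
                + (\<Sum>m\<in>?S. Poly_Mapping.lookup q m * eval_mono m x)"
    by (simp add: lookup_add distrib_right sum.distrib)
  also have "\<dots> = eval_poly p x + eval_poly q x"
    using eval_poly_superset[of ?S p x] eval_poly_superset[of ?S q x] by simp
  finally show ?thesis .
qed

lemma eval_poly_diff: "eval_poly (p - q) x = eval_poly p x - (eval_poly q x :: 'a::comm_ring_1)"
  using eval_poly_add[of "p - q" q x] by (simp add: eq_diff_eq)

lemma eval_poly_sum: "eval_poly (\<Sum>i\<in>A. f i) x = (\<Sum>i\<in>A. eval_poly (f i) x)"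
  by (induction A rule: infinite_finite_induct) (auto simp: eval_poly_add)

lemma poly_mapping_sum_single:
  "p = (\<Sum>m\<in>Poly_Mapping.keys p. Poly_Mapping.single m (Poly_Mapping.lookup p m))"
proof (rule poly_mapping_eqI)
  fix k
  have "Poly_Mapping.lookup (\<Sum>m\<in>Poly_Mapping.keys p. Poly_Mapping.single m (Poly_Mapping.lookup p m)) k
      = (\<Sum>m\<in>Poly_Mapping.keys p. if m = k then Poly_Mapping.lookup p m else 0)"
    by (simp add: lookup_sum lookup_single when_def)
  also have "\<dots> = Poly_Mapping.lookup p k" by (simp add: sum.delta in_keys_iff)
  finally show "Poly_Mapping.lookup p k = Poly_Mapping.lookup
      (\<Sum>m\<in>Poly_Mapping.keys p. Poly_Mapping.single m (Poly_Mapping.lookup p m)) k" ..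
qed

lemma eval_mono_zero [simp]: "eval_mono 0 x = 1"
  by (simp add: eval_mono_def)

lemma eval_mono_add: "eval_mono (a + b) x = eval_mono a x * eval_mono b x"
  by (simp add: eval_mono_def lookup_add power_add prod.distrib)

lemma eval_poly_mult: "eval_poly (p * q) x = eval_poly p x * eval_poly q x"
proof -
  have "p * q = (\<Sum>a\<in>Poly_Mapping.keys p. Poly_Mapping.single a (Poly_Mapping.lookup p a)) *
                (\<Sum>b\<in>Poly_Mapping.keys q. Poly_Mapping.single b (Poly_Mapping.lookup q b))"
    using poly_mapping_sum_single[of p] poly_mapping_sum_single[of q] by simp
  also have "\<dots> = (\<Sum>a\<in>Poly_Mapping.keys p. \<Sum>b\<in>Poly_Mapping.keys q.
       Poly_Mapping.single (a + b) (Poly_Mapping.lookup p a * Poly_Mapping.lookup q b))"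
    by (simp add: sum_product mult_single)
  finally have "eval_poly (p * q) x = (\<Sum>a\<in>Poly_Mapping.keys p. \<Sum>b\<in>Poly_Mapping.keys q.
       (Poly_Mapping.lookup p a * eval_mono a x) * (Poly_Mapping.lookup q b * eval_mono b x))"
    by (simp add: eval_poly_sum eval_poly_single eval_mono_add mult_ac)
  then show ?thesis by (simp add: eval_poly_def sum_product)
qed

lemma eval_poly_one [simp]: "eval_poly 1 x = 1"
  by (metis single_one eval_poly_single eval_mono_zero mult_1)

lemma eval_poly_prod: "eval_poly (\<Prod>i\<in>A. f i) x = (\<Prod>i\<in>A. eval_poly (f i) x)"
  by (induction A rule: infinite_finite_induct) (auto simp: eval_poly_mult)

lemma eval_mono_single_1: "eval_mono (Poly_Mapping.single v 1) x = x v"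
proof -
  have "x w ^ Poly_Mapping.lookup (Poly_Mapping.single v 1) w = (if w = v then x w else 1)" for w
    by (auto simp: lookup_single when_def)
  then show ?thesis by (simp add: eval_mono_def)
qed

lemma smult_poly_eq_single_0_mult: "smult_poly c p = Poly_Mapping.single 0 c * p"
  unfolding smult_poly_def by (rule mult_map_scale_conv_mult)

lemma eval_poly_smult: "eval_poly (smult_poly c p) x = c * eval_poly p x"
  by (simp add: smult_poly_eq_single_0_mult eval_poly_mult eval_poly_single)

lemma keys_smult_poly:
  fixes c :: "'a::{comm_semiring_1, semiring_no_zero_divisors}"
  shows "c \<noteq> 0 \<Longrightarrow> Poly_Mapping.keys (smult_poly c p) = Poly_Mapping.keys p"
  by (auto simp: smult_poly_def in_keys_iff map.rep_eq when_def)

lemma keys_single_mult: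
  "Poly_Mapping.keys (Poly_Mapping.single u c * g) \<subseteq> (+) u ` Poly_Mapping.keys g"
  using keys_mult[of "Poly_Mapping.single u c" g] by (auto split: if_splits)

lemma lookup_single_mult_add:
  fixes u :: "'k::cancel_comm_monoid_add"
  shows "Poly_Mapping.lookup (Poly_Mapping.single u c * g) (u + m) = c * Poly_Mapping.lookup g m"
proof -
  have "Poly_Mapping.single u c * g =
      (\<Sum>b\<in>Poly_Mapping.keys g. Poly_Mapping.single (u + b) (c * Poly_Mapping.lookup g b))"
    by (subst poly_mapping_sum_single[of g]) (simp add: sum_distrib_left mult_single)
  then have "Poly_Mapping.lookup (Poly_Mapping.single u c * g) (u + m)
     = (\<Sum>b\<in>Poly_Mapping.keys g. if b = m then c * Poly_Mapping.lookup g b else 0)"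
    by (simp add: lookup_sum lookup_single when_def)
  also have "\<dots> = c * Poly_Mapping.lookup g m" by (simp add: sum.delta in_keys_iff)
  finally show ?thesis .
qed

lemma vanishing_ideal_separates_point:
  assumes "finite F" "h \<notin> F"
  shows "\<exists>p :: ('v::finite, 'a::idom) mpoly. p \<in> vanishing_ideal F \<and> eval_poly p h \<noteq> 0"
proof -
  have "\<forall>f\<in>F. \<exists>v. h v \<noteq> f v" using assms(2) by (metis ext)
  then obtain w where w: "\<And>f. f \<in> F \<Longrightarrow> h (w f) \<noteq> f (w f)" by metis
  define linear :: "('v \<Rightarrow> 'a) \<Rightarrow> ('v, 'a) mpoly" where
    "linear f = Poly_Mapping.single (Poly_Mapping.single (w f) 1) 1 - Poly_Mapping.single 0 (f (w f))"
    for f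
  have "eval_poly (linear f) x = x (w f) - f (w f)" for f x
    unfolding linear_def eval_poly_diff eval_poly_single eval_mono_single_1 by simp
  then have eval_prod_linear: "eval_poly (\<Prod>f\<in>F. linear f) x = (\<Prod>f\<in>F. x (w f) - f (w f))" for x
    by (simp add: eval_poly_prod)
  show ?thesis
  proof (intro exI conjI)
    show "(\<Prod>f\<in>F. linear f) \<in> vanishing_ideal F"
      unfolding vanishing_ideal_def using assms(1) by (auto simp: eval_prod_linear)
    show "eval_poly (\<Prod>f\<in>F. linear f) h \<noteq> 0"
      unfolding eval_prod_linear using assms(1) w by auto
  qed
qed

subsection \<open>Reduction\<close>

definition reduce_by ::
  "('v monomial \<Rightarrow> 'v monomial \<Rightarrow> bool) \<Rightarrow> ('v, 'a::field) mpoly \<Rightarrow> ('v, 'a) mpoly \<Rightarrow> ('v, 'a) mpoly"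
  where "reduce_by le g q = q - Poly_Mapping.single (lm le q - lm le g) (lc le q / lc le g) * g"

lemma eval_reduce_by_root:
  "eval_poly g x = 0 \<Longrightarrow> eval_poly (reduce_by le g q) x = eval_poly q x"
  by (simp add: reduce_by_def eval_poly_diff eval_poly_mult)

lemma reduce_by_vanishing_ideal:
  "g \<in> vanishing_ideal S \<Longrightarrow> q \<in> vanishing_ideal S \<Longrightarrow> reduce_by le g q \<in> vanishing_ideal S"
  unfolding vanishing_ideal_def by (simp add: eval_reduce_by_root)

lemma lm_reduce_by_less:
  assumes "term_order le" "g \<noteq> 0" "mono_dvd (lm le g) (lm le q)" "reduce_by le g q \<noteq> 0"
  shows "le (lm le (reduce_by le g q)) (lm le q)" "lm le (reduce_by le g q) \<noteq> lm le q"
proof -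
  define u where "u = lm le q - lm le g"
  define c where "c = lc le q / lc le g"
  have lm_q: "lm le q = u + lm le g"
    using mono_dvd_eq_add_diff[OF assms(3)] unfolding u_def by (simp add: add.commute)
  have reduce_eq: "reduce_by le g q = q - Poly_Mapping.single u c * g"
    unfolding reduce_by_def u_def c_def ..
  have keys_bounded: "le m (lm le q)" if "m \<in> Poly_Mapping.keys (reduce_by le g q)" for m
  proof -
    have "m \<in> Poly_Mapping.keys q \<or> m \<in> Poly_Mapping.keys (Poly_Mapping.single u c * g)"
      using that keys_diff[of q "Poly_Mapping.single u c * g"] unfolding reduce_eq by blast
    then show ?thesis
    proof
      assume "m \<in> Poly_Mapping.keys q"
      then show ?thesis by (rule le_lm[OF assms(1)])
    next
      assume "m \<in> Poly_Mapping.keys (Poly_Mapping.single u c * g)"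
      then obtain b where b: "b \<in> Poly_Mapping.keys g" "m = u + b" using keys_single_mult by blast
      have "le (u + b) (u + lm le g)"
        using le_lm[OF assms(1) b(1)] by (rule term_order_add_left[OF assms(1)])
      then show ?thesis using b(2) lm_q by simp
    qed
  qed
  have "Poly_Mapping.lookup (reduce_by le g q) (lm le q) = lc le q - c * lc le g"
    unfolding reduce_eq
    by (simp add: lookup_minus lc_def lm_q lookup_single_mult_add)
  also have "\<dots> = 0"
    using lm_greatest(1)[OF assms(1,2)] by (simp add: c_def lc_def in_keys_iff)
  finally have "Poly_Mapping.lookup (reduce_by le g q) (lm le q) = 0" .
  then show "le (lm le (reduce_by le g q)) (lm le q)" "lm le (reduce_by le g q) \<noteq> lm le q"
    using lm_less_if_lookup_eq_0[OF assms(1,4)] keys_bounded by blast+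
qed

subsection \<open>Separating polynomials and standard monomials\<close>

lemma groebner_basis_least_separator:
  fixes G :: "('v::finite, 'a::field) mpoly set"
  assumes "term_order le" and gb: "is_groebner_basis le G (vanishing_ideal S)"
    and "p \<in> vanishing_ideal S" "eval_poly p h \<noteq> 0"
  shows "\<exists>g\<in>G. eval_poly g h \<noteq> 0 \<and>
    (\<forall>q\<in>vanishing_ideal S. eval_poly q h \<noteq> 0 \<longrightarrow> le (lm le g) (lm le q))"
proof -
  let ?separators = "{q \<in> vanishing_ideal S. eval_poly q h \<noteq> 0}"
  obtain q0 where q0: "q0 \<in> vanishing_ideal S" "eval_poly q0 h \<noteq> 0"
    and least: "\<And>q. q \<in> ?separators \<Longrightarrow> le (lm le q0) (lm le q)"
    using term_order_has_least[OF assms(1), of "lm le p" "lm le ` ?separators"] assms(3,4) by auto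
  then have "q0 \<noteq> 0" by auto
  then obtain g where g: "g \<in> G" "mono_dvd (lm le g) (lm le q0)"
    using gb q0(1) unfolding is_groebner_basis_def by blast
  have "g \<in> vanishing_ideal S" "g \<noteq> 0" using gb g(1) unfolding is_groebner_basis_def by auto
  have "eval_poly g h \<noteq> 0"
  proof
    assume "eval_poly g h = 0"
    \<comment> \<open>then reducing q0 by g keeps its value at h but lowers its leading monomial\<close>
    then have "eval_poly (reduce_by le g q0) h \<noteq> 0" using q0(2) by (simp add: eval_reduce_by_root)
    moreover have "reduce_by le g q0 \<in> vanishing_ideal S"
      using \<open>g \<in> vanishing_ideal S\<close> q0(1) by (rule reduce_by_vanishing_ideal)
    ultimately have "le (lm le q0) (lm le (reduce_by le g q0))" "reduce_by le g q0 \<noteq> 0"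
      using least by auto
    then show False
      using lm_reduce_by_less[OF assms(1) \<open>g \<noteq> 0\<close> g(2)] term_order_antisym[OF assms(1)] by blast
  qed
  moreover have "le (lm le g) (lm le q)" if "q \<in> ?separators" for q
    using mono_dvd_imp_term_order_le[OF assms(1) g(2)] least[OF that]
    by (rule term_order_trans[OF assms(1)])
  ultimately show ?thesis using g(1) by blast
qed

lemma reduced_groebner_basis_keys_standard:
  fixes g :: "('v::finite, 'a::field) mpoly"
  assumes "term_order le" and rgb: "is_reduced_groebner_basis le G (vanishing_ideal F)"
    and "g \<in> G" "eval_poly g h \<noteq> 0"
    and least: "\<forall>q\<in>vanishing_ideal F. eval_poly q h \<noteq> 0 \<longrightarrow> le (lm le g) (lm le q)"
  shows "Poly_Mapping.keys g \<subseteq> standard_monomials le (F \<union> {h})"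
proof
  fix m assume m: "m \<in> Poly_Mapping.keys g"
  show "m \<in> standard_monomials le (F \<union> {h})"
  proof (rule ccontr)
    assume "m \<notin> standard_monomials le (F \<union> {h})"
    then obtain p where p: "p \<in> vanishing_ideal (F \<union> {h})" "p \<noteq> 0" "lm le p = m"
      unfolding standard_monomials_def by blast
    have gb: "is_groebner_basis le G (vanishing_ideal F)"
      using rgb unfolding is_reduced_groebner_basis_def by blast
    have p_F: "p \<in> vanishing_ideal F" and "eval_poly p h = 0"
      using p(1) unfolding vanishing_ideal_def by auto
    obtain g' where g': "g' \<in> G" "mono_dvd (lm le g') m"
      using gb p_F p(2,3) unfolding is_groebner_basis_def by blast
    have reduced: "\<not> mono_dvd (lm le g2) m'"
      if "g1 \<in> G" "g2 \<in> G" "g1 \<noteq> g2" "m' \<in> Poly_Mapping.keys g1" for g1 g2 m'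
      using rgb that unfolding is_reduced_groebner_basis_def by blast
    have "g' = g" using reduced[OF assms(3) g'(1) _ m] g'(2) by blast
    then have "le (lm le g) m" using mono_dvd_imp_term_order_le[OF assms(1) g'(2)] by simp
    then have "lm le g = m" using le_lm[OF assms(1) m] by (rule term_order_antisym[OF assms(1)])
    then have dvd: "mono_dvd (lm le p) (lm le g)" using p(3) by (simp add: mono_dvd_def)
    have "g \<in> vanishing_ideal F" using gb assms(3) unfolding is_groebner_basis_def by blast
    then have "reduce_by le p g \<in> vanishing_ideal F" using p_F by (intro reduce_by_vanishing_ideal)
    moreover have "eval_poly (reduce_by le p g) h \<noteq> 0"
      using \<open>eval_poly p h = 0\<close> assms(4) by (simp add: eval_reduce_by_root)
    ultimately have "le (lm le g) (lm le (reduce_by le p g))" "reduce_by le p g \<noteq> 0"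
      using least by auto
    then show False
      using lm_reduce_by_less[OF assms(1) p(2) dvd] term_order_antisym[OF assms(1)] by blast
  qed
qed

lemma standard_supported_vanishing_eq_0:
  assumes "term_order le" "Poly_Mapping.keys p \<subseteq> standard_monomials le T" "p \<in> vanishing_ideal T"
  shows "p = 0"
proof (rule ccontr)
  assume "p \<noteq> 0"
  then have "lm le p \<in> standard_monomials le T"
    using lm_greatest(1)[OF assms(1) \<open>p \<noteq> 0\<close>] assms(2) by blast
  then show False using assms(3) \<open>p \<noteq> 0\<close> unfolding standard_monomials_def by blast
qed

lemma standard_supported_interpolation_unique:
  fixes p q :: "('v::finite, 'a::comm_ring_1) mpoly"
  assumes "term_order le"
    and "Poly_Mapping.keys p \<subseteq> standard_monomials le T" "Poly_Mapping.keys q \<subseteq> standard_monomials le T"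
    and "\<forall>t\<in>T. eval_poly p t = eval_poly q t"
  shows "p = q"
proof -
  have "Poly_Mapping.keys (p - q) \<subseteq> standard_monomials le T"
    using keys_diff[of p q] assms(2,3) by blast
  moreover have "p - q \<in> vanishing_ideal T"
    using assms(4) unfolding vanishing_ideal_def by (simp add: eval_poly_diff)
  ultimately have "p - q = 0" by (rule standard_supported_vanishing_eq_0[OF assms(1)])
  then show ?thesis by simp
qed

lemma reduced_groebner_basis_indicator_interpolant:
  fixes g :: "('v::finite, 'a::field) mpoly"
  assumes "term_order le" "is_reduced_groebner_basis le G (vanishing_ideal F)"
    and "g \<in> G" "eval_poly g h \<noteq> 0"
    and "\<forall>q\<in>vanishing_ideal F. eval_poly q h \<noteq> 0 \<longrightarrow> le (lm le g) (lm le q)"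
  shows "(\<forall>t\<in>F \<union> {h}. (if t = h then 1 else 0) = eval_poly (smult_poly (1 / eval_poly g h) g) t) \<and>
    Poly_Mapping.keys (smult_poly (1 / eval_poly g h) g) \<subseteq> standard_monomials le (F \<union> {h}) \<and>
    (\<forall>q. Poly_Mapping.keys q \<subseteq> standard_monomials le (F \<union> {h}) \<and>
         (\<forall>t\<in>F \<union> {h}. eval_poly q t = (if t = h then 1 else 0)) \<longrightarrow>
         q = smult_poly (1 / eval_poly g h) g)"
proof (intro conjI allI impI)
  have "g \<in> vanishing_ideal F"
    using assms(2,3) unfolding is_reduced_groebner_basis_def is_groebner_basis_def by blast
  then show interpolates:
    "\<forall>t\<in>F \<union> {h}. (if t = h then 1 else 0) = eval_poly (smult_poly (1 / eval_poly g h) g) t"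
    using assms(4) unfolding vanishing_ideal_def by (auto simp: eval_poly_smult)
  show standard: "Poly_Mapping.keys (smult_poly (1 / eval_poly g h) g) \<subseteq> standard_monomials le (F \<union> {h})"
    using reduced_groebner_basis_keys_standard[OF assms] assms(4) by (simp add: keys_smult_poly)
  fix q
  assume "Poly_Mapping.keys q \<subseteq> standard_monomials le (F \<union> {h}) \<and>
          (\<forall>t\<in>F \<union> {h}. eval_poly q t = (if t = h then 1 else 0))"
  then show "q = smult_poly (1 / eval_poly g h) g"
    using standard_supported_interpolation_unique[OF assms(1) _ standard] interpolates by simp
qed

theorem mainTheorem5:
  fixes le :: "'v::finite monomial \<Rightarrow> 'v monomial \<Rightarrow> bool"
    and F :: "('v \<Rightarrow> 'a::field) set"
    and h :: "'v \<Rightarrow> 'a"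
    and G :: "('v, 'a) mpoly set"
  assumes "term_order le"
    and "finite F"
    and "h \<notin> F"
    and "is_reduced_groebner_basis le G (vanishing_ideal F)"
  shows "(\<exists>g\<in>G. eval_poly g h \<noteq> 0 \<and>
            (\<forall>g'\<in>G. eval_poly g' h \<noteq> 0 \<longrightarrow> le (lm le g) (lm le g'))) \<and>
         (\<forall>g\<in>G. eval_poly g h \<noteq> 0 \<and>
            (\<forall>g'\<in>G. eval_poly g' h \<noteq> 0 \<longrightarrow> le (lm le g) (lm le g')) \<longrightarrow>
            (\<forall>t\<in>F \<union> {h}. (if t = h then 1 else 0) = eval_poly (smult_poly (1 / eval_poly g h) g) t) \<and>
            Poly_Mapping.keys (smult_poly (1 / eval_poly g h) g) \<subseteq> standard_monomials le (F \<union> {h}) \<and>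
            (\<forall>q. Poly_Mapping.keys q \<subseteq> standard_monomials le (F \<union> {h}) \<and>
                 (\<forall>t\<in>F \<union> {h}. eval_poly q t = (if t = h then 1 else 0)) \<longrightarrow>
                 q = smult_poly (1 / eval_poly g h) g))"
proof -
  have gb: "is_groebner_basis le G (vanishing_ideal F)"
    using assms(4) unfolding is_reduced_groebner_basis_def by blast
  then have G_vanishing: "G \<subseteq> vanishing_ideal F" unfolding is_groebner_basis_def by blast
  obtain p :: "('v, 'a) mpoly" where "p \<in> vanishing_ideal F" "eval_poly p h \<noteq> 0"
    using vanishing_ideal_separates_point[OF assms(2,3)] by blast
  then obtain g0 where g0: "g0 \<in> G" "eval_poly g0 h \<noteq> 0"
    and g0_least: "\<forall>q\<in>vanishing_ideal F. eval_poly q h \<noteq> 0 \<longrightarrow> le (lm le g0) (lm le q)"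
    using groebner_basis_least_separator[OF assms(1) gb] by blast
  then have minimal_exists: "\<exists>g\<in>G. eval_poly g h \<noteq> 0 \<and>
      (\<forall>g'\<in>G. eval_poly g' h \<noteq> 0 \<longrightarrow> le (lm le g) (lm le g'))"
    using G_vanishing by blast
  have least: "\<forall>q\<in>vanishing_ideal F. eval_poly q h \<noteq> 0 \<longrightarrow> le (lm le g) (lm le q)"
    if "\<forall>g'\<in>G. eval_poly g' h \<noteq> 0 \<longrightarrow> le (lm le g) (lm le g')" for g
    using that g0 g0_least term_order_trans[OF assms(1)] by blast
  show ?thesis
    by (rule conjI[OF minimal_exists])
      (intro ballI impI reduced_groebner_basis_indicator_interpolant[OF assms(1,4)]; use least in blast)
qed

end
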